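(* Let $X_1,X_2,\dots,X_n$ be independent random variables uniformly distributed on $[0,1]$, observed sequentially; at time $i$, after seeing $X_i$, one must irrevocably decide whether to select it, the selected values being required to form a monotone decreasing sequence $X_{i_1}>X_{i_2}>\cdots>X_{i_k}$ with $i_1<\cdots<i_k$, and decisions may depend only on $X_1,\dots,X_i$. Let $\widetilde V_n$ be the number of values selected under an optimal policy (one maximizing the expected number of selections); equivalently $\mathbb{E}[\widetilde V_n]=\widetilde v_n(1)$ where $\widetilde v_0\equiv0$ and $\widetilde v_n(x)=(1-x)\widetilde v_{n-1}(x)+\int_0^x\max\{\widetilde v_{n-1}(x),1+\widetilde v_{n-1}(y)\}dy$ for $x\in[0,1]$. Then $\mathbb{E}[\widetilde V_n]=\widetilde v_n(1)\le\sqrt{2n}$ for all $n\ge1$. *)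

theory Defs
  imports "HOL-Analysis.Analysis"
begin

text \<open>Value function of the optimal online decreasing-subsequence selection problem
  for n i.i.d. uniform[0,1] observations, where x is the last selected value
  (initially 1). vtilde n 1 is the optimal expected number of selections.\<close>

fun vtilde :: "nat \<Rightarrow> real \<Rightarrow> real" where
  "vtilde 0 x = 0"
| "vtilde (Suc n) x =
     (1 - x) * vtilde n x + integral {0..x} (\<lambda>y. max (vtilde n x) (1 + vtilde n y))"

end

theory Submission
  imports Defs
begin

text \<open>
  By induction on n we prove the stronger bound vtilde n x \<le> sqrt (2 n) * sqrt x on [0, 1].
  The one-step operator bellman_op is monotone in v, so it suffices to apply it to
  w x = s * sqrt x with s = sqrt (2 n) and to show that the result is at most
  sqrt (s^2 + 2) * sqrt x. Writing x = t^2, the integrand max (s t) (1 + s sqrt y) equals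
  1 + s sqrt y except below the threshold y = (t - 1/s)^2, where it is the constant s t.
  The integral is then explicit, and in each of the two cases the claim reduces to an
  elementary inequality in s and t.
\<close>

text \<open>No integrability of f is needed: otherwise integral S f = 0.\<close>

lemma integral_le_nonneg_majorant:
  fixes f g :: "'a::euclidean_space \<Rightarrow> real"
  assumes "g integrable_on S" "\<And>x. x \<in> S \<Longrightarrow> f x \<le> g x" "\<And>x. x \<in> S \<Longrightarrow> 0 \<le> g x"
  shows "integral S f \<le> integral S g"
proof (cases "f integrable_on S")
  case True
  thus ?thesis using assms by (intro integral_le) auto
next
  case False
  thus ?thesis using assms by (simp add: not_integrable_integral integral_nonneg)
qed

definition bellman_op :: "(real \<Rightarrow> real) \<Rightarrow> real \<Rightarrow> real" where
  "bellman_op v x = (1 - x) * v x + integral {0..x} (\<lambda>y. max (v x) (1 + v y))"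

lemma vtilde_Suc_eq_bellman_op: "vtilde (Suc n) x = bellman_op (vtilde n) x"
  by (simp add: bellman_op_def)

lemma bellman_op_mono:
  assumes "0 \<le> x" "x \<le> 1" "\<And>y. y \<in> {0..x} \<Longrightarrow> v y \<le> w y" "0 \<le> w x"
    and "(\<lambda>y. max (w x) (1 + w y)) integrable_on {0..x}"
  shows "bellman_op v x \<le> bellman_op w x"
proof -
  have "v x \<le> w x" using assms(1,3) by simp
  hence "(1 - x) * v x \<le> (1 - x) * w x" using assms(2) by (simp add: mult_left_mono)
  moreover have "integral {0..x} (\<lambda>y. max (v x) (1 + v y)) \<le> integral {0..x} (\<lambda>y. max (w x) (1 + w y))"
  proof (rule integral_le_nonneg_majorant)
    fix y assume "y \<in> {0..x}"
    thus "max (v x) (1 + v y) \<le> max (w x) (1 + w y)"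
      using \<open>v x \<le> w x\<close> assms(3) by (intro max.mono) auto
    show "0 \<le> max (w x) (1 + w y)" using assms(4) by simp
  qed (rule assms(5))
  ultimately show ?thesis by (simp add: bellman_op_def)
qed

lemma has_integral_1_plus_mult_sqrt:
  fixes s u t :: real
  assumes "0 \<le> u" "u \<le> t"
  shows "((\<lambda>y. 1 + s * sqrt y) has_integral (t\<^sup>2 - u\<^sup>2 + 2/3 * s * (t ^ 3 - u ^ 3))) {u\<^sup>2..t\<^sup>2}"
proof -
  define F where "F y = y + 2/3 * s * (y * sqrt y)" for y :: real
  have "((\<lambda>y. 1 + s * sqrt y) has_integral (F (t\<^sup>2) - F (u\<^sup>2))) {u\<^sup>2..t\<^sup>2}"
  proof (rule fundamental_theorem_of_calculus_interior)
    show "u\<^sup>2 \<le> t\<^sup>2" using assms by (simp add: power_mono)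
    show "continuous_on {u\<^sup>2..t\<^sup>2} F" unfolding F_def by (intro continuous_intros)
    fix y assume y: "y \<in> {u\<^sup>2<..<t\<^sup>2}"
    have "0 < y" using y by (auto intro: le_less_trans[OF zero_le_power2])
    have "y * inverse (sqrt y) = sqrt y"
      using \<open>0 < y\<close> by (simp add: real_div_sqrt flip: divide_inverse)
    hence "(F has_real_derivative 1 + s * sqrt y) (at y)"
      unfolding F_def using \<open>0 < y\<close> by (auto intro!: derivative_eq_intros simp: algebra_simps)
    thus "(F has_vector_derivative 1 + s * sqrt y) (at y)"
      by (simp add: has_real_derivative_iff_has_vector_derivative)
  qed
  moreover have "F (t\<^sup>2) - F (u\<^sup>2) = t\<^sup>2 - u\<^sup>2 + 2/3 * s * (t ^ 3 - u ^ 3)"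
    using assms by (simp add: F_def power2_eq_square power3_eq_cube algebra_simps)
  ultimately show ?thesis by simp
qed

lemma has_integral_max_sqrt_no_threshold:
  fixes s t :: real
  assumes "0 \<le> s" "0 \<le> t" "s * t \<le> 1"
  shows "((\<lambda>y. max (s * t) (1 + s * sqrt y)) has_integral (t\<^sup>2 + 2/3 * s * t ^ 3)) {0..t\<^sup>2}"
proof -
  have int: "((\<lambda>y. 1 + s * sqrt y) has_integral (t\<^sup>2 + 2/3 * s * t ^ 3)) {0..t\<^sup>2}"
    using has_integral_1_plus_mult_sqrt[of 0 t s] assms(2) by simp
  have eq: "max (s * t) (1 + s * sqrt y) = 1 + s * sqrt y" if "y \<in> {0..t\<^sup>2}" for y
  proof -
    have "0 \<le> s * sqrt y" using assms(1) that by simp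
    thus ?thesis using assms(3) by (intro max_absorb2) linarith
  qed
  show ?thesis using int by (rule has_integral_eq[rotated]) (simp add: eq)
qed

lemma has_integral_max_sqrt_threshold:
  fixes s t :: real
  assumes "0 \<le> t" "1 \<le> s * t"
  defines "u \<equiv> t - 1 / s"
  shows "((\<lambda>y. max (s * t) (1 + s * sqrt y))
    has_integral (s * t * u\<^sup>2 + (t\<^sup>2 - u\<^sup>2 + 2/3 * s * (t ^ 3 - u ^ 3)))) {0..t\<^sup>2}"
proof -
  have "0 < s * t" using assms(2) by simp
  hence "0 < s" using assms(1) by (auto simp: zero_less_mult_iff)
  hence su: "s * u = s * t - 1" by (simp add: u_def field_simps)
  have "0 \<le> u" "u \<le> t" using \<open>0 < s\<close> assms(2) by (simp_all add: u_def field_simps)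
  have "((\<lambda>y. max (s * t) (1 + s * sqrt y)) has_integral (s * t * u\<^sup>2)) {0..u\<^sup>2}"
  proof -
    have eq: "max (s * t) (1 + s * sqrt y) = s * t" if "y \<in> {0..u\<^sup>2}" for y
    proof -
      have "sqrt y \<le> u"
        using that \<open>0 \<le> u\<close> real_sqrt_le_mono[of y "u\<^sup>2"] by simp
      hence "s * sqrt y \<le> s * u" using \<open>0 < s\<close> by (intro mult_left_mono) auto
      thus ?thesis using su by (intro max_absorb1) linarith
    qed
    have "((\<lambda>y. s * t) has_integral (s * t * u\<^sup>2)) {0..u\<^sup>2}"
      using has_integral_const_real[of "s * t" 0 "u\<^sup>2"] by (simp add: mult.commute)
    thus ?thesis by (rule has_integral_eq[rotated]) (simp add: eq)
  qed
  moreover have "((\<lambda>y. max (s * t) (1 + s * sqrt y))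
      has_integral (t\<^sup>2 - u\<^sup>2 + 2/3 * s * (t ^ 3 - u ^ 3))) {u\<^sup>2..t\<^sup>2}"
  proof -
    have eq: "max (s * t) (1 + s * sqrt y) = 1 + s * sqrt y" if "y \<in> {u\<^sup>2..t\<^sup>2}" for y
    proof -
      have "u \<le> sqrt y"
        using that \<open>0 \<le> u\<close> real_sqrt_le_mono[of "u\<^sup>2" y] by simp
      hence "s * u \<le> s * sqrt y" using \<open>0 < s\<close> by (intro mult_left_mono) auto
      thus ?thesis using su by (intro max_absorb2) linarith
    qed
    show ?thesis
      using has_integral_1_plus_mult_sqrt[OF \<open>0 \<le> u\<close> \<open>u \<le> t\<close>]
      by (rule has_integral_eq[rotated]) (simp add: eq)
  qed
  moreover have "u\<^sup>2 \<le> t\<^sup>2" using \<open>u \<le> t\<close> \<open>0 \<le> u\<close> by (rule power_mono)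
  ultimately show ?thesis by (rule has_integral_combine[OF zero_le_power2, rotated])
qed

lemma bellman_sqrt_ineq_no_threshold:
  fixes s t :: real
  assumes "0 \<le> t" "t \<le> 1"
  shows "(1 - t\<^sup>2) * (s * t) + (t\<^sup>2 + 2/3 * s * t ^ 3) \<le> sqrt (s\<^sup>2 + 2) * t"
proof -
  define c where "c = 1 - s * t / 3"
  have "t\<^sup>2 \<le> 1" using assms by (simp add: power_le_one)
  have "(s + t * c)\<^sup>2 = s\<^sup>2 + 2 * (s * t) * c + t\<^sup>2 * c\<^sup>2"
    by (simp add: power2_eq_square algebra_simps)
  also have "\<dots> \<le> s\<^sup>2 + 2 * (s * t) * c + c\<^sup>2"
    using \<open>t\<^sup>2 \<le> 1\<close> mult_right_mono[of "t\<^sup>2" 1 "c\<^sup>2"] by simp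
  also have "\<dots> \<le> s\<^sup>2 + 2"
  proof -
    have "0 \<le> 5 * (s * t - 6/5)\<^sup>2 + 9/5" by simp
    thus ?thesis by (simp add: c_def power2_eq_square algebra_simps)
  qed
  finally have "s + t * c \<le> sqrt (s\<^sup>2 + 2)" by (rule real_le_rsqrt)
  hence "t * (s + t * c) \<le> t * sqrt (s\<^sup>2 + 2)" using assms(1) by (rule mult_left_mono)
  moreover have "(1 - t\<^sup>2) * (s * t) + (t\<^sup>2 + 2/3 * s * t ^ 3) = t * (s + t * c)"
    by (simp add: c_def power2_eq_square power3_eq_cube algebra_simps)
  ultimately show ?thesis by (simp add: mult.commute)
qed

lemma bellman_sqrt_ineq_threshold:
  fixes s t :: real
  assumes "0 \<le> t" "t \<le> 1" "1 \<le> s * t"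
  defines "u \<equiv> t - 1 / s"
  shows "(1 - t\<^sup>2) * (s * t) + (s * t * u\<^sup>2 + (t\<^sup>2 - u\<^sup>2 + 2/3 * s * (t ^ 3 - u ^ 3)))
    \<le> sqrt (s\<^sup>2 + 2) * t" (is "?E \<le> _")
proof -
  define a where "a = s * t"
  define r where "r = sqrt (s\<^sup>2 + 2)"
  have "0 < t" using assms(1,3) by (cases "t = 0") auto
  moreover have "t \<le> s * t" using assms(2,3) by linarith
  ultimately have "1 \<le> s" by (simp add: mult_le_cancel_right1)
  hence s0: "0 < s" by simp
  have su: "s * u = a - 1" using s0 by (simp add: u_def a_def field_simps)
  have "s\<^sup>2 * ?E = a * s\<^sup>2 - a ^ 3 + a * (s * u)\<^sup>2 + a\<^sup>2 - (s * u)\<^sup>2 + 2/3 * (a ^ 3 - (s * u) ^ 3)"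
    unfolding a_def by (simp add: algebra_simps power2_eq_square power3_eq_cube)
  also have "\<dots> = a * s\<^sup>2 + a - 1/3"
    unfolding su by (simp add: algebra_simps power2_eq_square power3_eq_cube)
  finally have E: "s\<^sup>2 * ?E = a * s\<^sup>2 + a - 1/3" .
  have r2: "r\<^sup>2 = s\<^sup>2 + 2" by (simp add: r_def)
  have "s \<le> r" unfolding r_def by (rule real_le_rsqrt) simp
  define d where "d = s\<^sup>2 + 1 - r * s"
  \<comment> \<open>Scaled by s^2 the claim reads 3 a d \<le> 1, and d = 1 / (s^2 + 1 + r s) is small.\<close>
  have "d * (s\<^sup>2 + 1 + r * s) = (s\<^sup>2 + 1)\<^sup>2 - r\<^sup>2 * s\<^sup>2"
    by (simp add: d_def power2_eq_square algebra_simps)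
  also have "\<dots> = 1"
    unfolding r2 by (simp add: power2_eq_square algebra_simps)
  finally have dd: "d * (s\<^sup>2 + 1 + r * s) = 1" .
  have "0 < s\<^sup>2 + 1 + r * s" using \<open>s \<le> r\<close> s0 by (simp add: add_pos_nonneg)
  hence "0 < d" using dd by (metis zero_less_mult_pos2 zero_less_one)
  have "s\<^sup>2 \<le> r * s" using \<open>s \<le> r\<close> s0 by (simp add: power2_eq_square)
  have "3 * s \<le> 2 * s\<^sup>2 + 1"
    using \<open>1 \<le> s\<close> mult_nonneg_nonneg[of "2 * s - 1" "s - 1"]
    by (simp add: power2_eq_square algebra_simps)
  have "a \<le> s" using assms(2) s0 by (simp add: a_def mult_left_le)
  hence "3 * a * d \<le> 3 * s * d" using \<open>0 < d\<close> by simp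
  also have "\<dots> \<le> d * (2 * s\<^sup>2 + 1)"
    using \<open>3 * s \<le> 2 * s\<^sup>2 + 1\<close> \<open>0 < d\<close> by (simp add: mult.commute)
  also have "\<dots> \<le> d * (s\<^sup>2 + 1 + r * s)"
    using \<open>s\<^sup>2 \<le> r * s\<close> \<open>0 < d\<close> by (intro mult_left_mono) auto
  finally have "3 * a * d \<le> 1" unfolding dd .
  hence "s\<^sup>2 * ?E \<le> s\<^sup>2 * (r * t)"
    using E by (simp add: d_def a_def power2_eq_square algebra_simps)
  thus ?thesis using s0 by (simp add: r_def)
qed

lemma bellman_op_sqrt_le:
  fixes s x :: real
  assumes "0 \<le> s" "0 \<le> x" "x \<le> 1"
  shows "bellman_op (\<lambda>x. s * sqrt x) x \<le> sqrt (s\<^sup>2 + 2) * sqrt x"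
proof -
  obtain t where "0 \<le> t" "t \<le> 1" "x = t\<^sup>2"
    using assms(2,3) by (metis real_sqrt_ge_zero real_sqrt_le_1_iff real_sqrt_pow2)
  obtain J where J: "((\<lambda>y. max (s * t) (1 + s * sqrt y)) has_integral J) {0..t\<^sup>2}"
    and "(1 - t\<^sup>2) * (s * t) + J \<le> sqrt (s\<^sup>2 + 2) * t"
  proof (cases "s * t \<le> 1")
    case True
    show ?thesis
      by (rule that[OF has_integral_max_sqrt_no_threshold[OF assms(1) \<open>0 \<le> t\<close> True]
            bellman_sqrt_ineq_no_threshold[OF \<open>0 \<le> t\<close> \<open>t \<le> 1\<close>]])
  next
    case False
    hence "1 \<le> s * t" by simp
    show ?thesis
      by (rule that[OF has_integral_max_sqrt_threshold[OF \<open>0 \<le> t\<close> \<open>1 \<le> s * t\<close>]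
            bellman_sqrt_ineq_threshold[OF \<open>0 \<le> t\<close> \<open>t \<le> 1\<close> \<open>1 \<le> s * t\<close>]])
  qed
  thus ?thesis using integral_unique[OF J] \<open>0 \<le> t\<close> by (simp add: bellman_op_def \<open>x = t\<^sup>2\<close>)
qed

lemma vtilde_le_sqrt:
  assumes "0 \<le> x" "x \<le> 1"
  shows "vtilde n x \<le> sqrt (2 * real n) * sqrt x"
  using assms
proof (induction n arbitrary: x)
  case 0
  thus ?case by simp
next
  case (Suc n)
  let ?w = "\<lambda>x. sqrt (2 * real n) * sqrt x"
  have "vtilde (Suc n) x = bellman_op (vtilde n) x" by (rule vtilde_Suc_eq_bellman_op)
  also have "\<dots> \<le> bellman_op ?w x"
  proof (rule bellman_op_mono)
    show "(\<lambda>y. max (?w x) (1 + ?w y)) integrable_on {0..x}"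
      by (intro integrable_continuous_interval continuous_intros)
  qed (use Suc in auto)
  also have "\<dots> \<le> sqrt ((sqrt (2 * real n))\<^sup>2 + 2) * sqrt x"
    using Suc.prems by (intro bellman_op_sqrt_le) auto
  also have "\<dots> = sqrt (2 * real (Suc n)) * sqrt x" by simp
  finally show ?case .
qed

theorem mainTheorem4:
  fixes n :: nat
  assumes "n \<ge> 1"
  shows "vtilde n 1 \<le> sqrt (2 * real n)"
  using vtilde_le_sqrt[of 1 n] by simp

end
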